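(* Let $b_n$ be the number of big-walks of length $2n$. Then $b_{m+n}\ge b_m b_n$ for all $m,n\ge 0$, and $b_n\le 16^n$; consequently $\lim_{n\to\infty}\sqrt[n]{b_n}$ exists and is finite. Moreover, if $\hat b_n$ denotes the number of left-walks of length $2n$, then $2\hat b_n\ge b_n$ and $\lim_{n\to\infty}\sqrt[n]{\hat b_n}=\lim_{n\to\infty}\sqrt[n]{b_n}$.
   Context: All walks are finite sequences of unit steps from $\{N,E,S,W\}=\{(0,1),(1,0),(0,-1),(-1,0)\}$ on $\mathbb{Z}^2$, starting at $(0,0)$. A walk is \emph{eager} if it contains no two consecutive steps $E$ then $S$, and no two consecutive steps $N$ then $W$. A \emph{QP-subloop} of a walk is a contiguous subsequence of steps starting and ending at the same point $(p,q)$ and visiting only points $(x,y)$ with $x\ge p$, $y\ge q$. A walk is \emph{standard} if every QP-subloop (of positive length) begins with an $N$ step. A \emph{big-walk} is a standard eager walk staying in the half-plane $\{x+y\ge 0\}$ and ending at some point $(x,-x)$. A \emph{left-walk} is a big-walk ending at a point $(x,-x)$ with $x\le 0$. *)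

theory Defs
  imports Complex_Main
begin

datatype step = N | E | S | W

fun step_vec :: "step \<Rightarrow> int \<times> int" where
  "step_vec N = (0, 1)"
| "step_vec E = (1, 0)"
| "step_vec S = (0, -1)"
| "step_vec W = (-1, 0)"

definition pos :: "step list \<Rightarrow> nat \<Rightarrow> int \<times> int" where
  "pos w k = ((\<Sum>s\<leftarrow>take k w. fst (step_vec s)), (\<Sum>s\<leftarrow>take k w. snd (step_vec s)))"

definition eager :: "step list \<Rightarrow> bool" where
  "eager w \<longleftrightarrow> (\<forall>i. Suc i < length w \<longrightarrow>
      \<not> (w ! i = E \<and> w ! Suc i = S) \<and> \<not> (w ! i = N \<and> w ! Suc i = W))"

definition qp_subloop :: "step list \<Rightarrow> nat \<Rightarrow> nat \<Rightarrow> bool" where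
  "qp_subloop w i j \<longleftrightarrow> i \<le> j \<and> j \<le> length w \<and> pos w i = pos w j \<and>
     (\<forall>k. i \<le> k \<and> k \<le> j \<longrightarrow>
        fst (pos w i) \<le> fst (pos w k) \<and> snd (pos w i) \<le> snd (pos w k))"

definition standard :: "step list \<Rightarrow> bool" where
  "standard w \<longleftrightarrow> (\<forall>i j. i < j \<and> qp_subloop w i j \<longrightarrow> w ! i = N)"

definition big_walk :: "step list \<Rightarrow> bool" where
  "big_walk w \<longleftrightarrow> standard w \<and> eager w \<and>
     (\<forall>k \<le> length w. fst (pos w k) + snd (pos w k) \<ge> 0) \<and>
     fst (pos w (length w)) + snd (pos w (length w)) = 0"

definition left_walk :: "step list \<Rightarrow> bool" where
  "left_walk w \<longleftrightarrow> big_walk w \<and> fst (pos w (length w)) \<le> 0"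

definition num_big :: "nat \<Rightarrow> nat" where
  "num_big n = card {w. length w = 2 * n \<and> big_walk w}"

definition num_left :: "nat \<Rightarrow> nat" where
  "num_left n = card {w. length w = 2 * n \<and> left_walk w}"

end

theory Submission
  imports Defs "HOL-Library.Product_Plus" "HOL-Library.Product_Order"
begin

text \<open>
  Concatenating two big-walks gives a big-walk: the diagonal coordinate \<open>x + y\<close> of the first
  walk attains its minimum \<open>0\<close> at the junction, so a QP-subloop crossing the junction already
  closes there, and the last step of a big-walk is \<open>S\<close> or \<open>W\<close>, which cannot start a
  forbidden pair. Hence the counts are supermultiplicative, and Fekete's lemma applied to their
  logarithms gives the limit.

  For left-walks, reflect in the diagonal \<open>x = y\<close> every step that lies in no QP-subloop and
  keep the other steps. Inside a maximal QP-subloop the walk is then only translated, so the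
  QP-subloops are unchanged; hence the map is an involution preserving standardness, eagerness
  and the diagonal coordinate, and it sends the endpoint \<open>(x, -x)\<close> to \<open>(-x, x)\<close>. It therefore
  maps the big-walks ending with \<open>x > 0\<close> injectively into the left-walks.
\<close>

section \<open>Positions and QP-subloops\<close>

lemma pos_0 [simp]: "pos w 0 = 0"
  by (simp add: pos_def zero_prod_def)

lemma pos_Suc: "k < length w \<Longrightarrow> pos w (Suc k) = pos w k + step_vec (w ! k)"
  by (simp add: pos_def take_Suc_conv_app_nth prod_eq_iff)

lemma pos_append_left: "k \<le> length u \<Longrightarrow> pos (u @ v) k = pos u k"
  by (simp add: pos_def)

lemma pos_append_right: "pos (u @ v) (length u + k) = pos u (length u) + pos v k"
  by (simp add: pos_def prod_eq_iff)

definition qp_loop :: "step list \<Rightarrow> nat \<Rightarrow> nat \<Rightarrow> bool" where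
  "qp_loop w i j \<longleftrightarrow> i < j \<and> qp_subloop w i j"

lemma qp_loop_iff:
  "qp_loop w i j \<longleftrightarrow> i < j \<and> j \<le> length w \<and> pos w i = pos w j \<and>
     (\<forall>k. i \<le> k \<and> k \<le> j \<longrightarrow> pos w i \<le> pos w k)"
  by (auto simp: qp_loop_def qp_subloop_def less_eq_prod_def)

lemma standard_iff_qp_loop: "standard w \<longleftrightarrow> (\<forall>i j. qp_loop w i j \<longrightarrow> w ! i = N)"
  by (auto simp: standard_def qp_loop_def)

lemma qp_loop_last_step:
  assumes "qp_loop w i j"
  shows "w ! (j - 1) = S \<or> w ! (j - 1) = W"
proof -
  have ij: "i < j" "j \<le> length w" and ret: "pos w j = pos w i"
    and above: "pos w i \<le> pos w (j - 1)"
    using assms by (auto simp: qp_loop_iff)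
  have "pos w j = pos w (j - 1) + step_vec (w ! (j - 1))"
    using pos_Suc[of "j - 1" w] ij by simp
  with ret above show ?thesis
    by (cases "w ! (j - 1)") (auto simp: less_eq_prod_def prod_eq_iff)
qed

lemma qp_loop_union_ordered:
  assumes l1: "qp_loop w i j" and l2: "qp_loop w a b" and "i \<le> a" "a \<le> j"
  shows "qp_loop w i (max j b)"
proof (cases "b \<le> j")
  case True
  then show ?thesis using l1 by (simp add: max_def)
next
  case False
  have "pos w i \<le> pos w a" "pos w a \<le> pos w j" "pos w i = pos w j"
    using l1 l2 assms(3,4) False by (auto simp: qp_loop_iff)
  then have "pos w a = pos w i" by (metis order_antisym)
  moreover have "pos w i \<le> pos w k" if "i \<le> k" "k \<le> b" for k
    using l1 l2 that assms(4) \<open>pos w a = pos w i\<close> by (cases "k \<le> j") (auto simp: qp_loop_iff)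
  ultimately show ?thesis
    using l1 l2 False by (auto simp: qp_loop_iff max_def)
qed

lemma qp_loop_union:
  assumes "qp_loop w i j" "qp_loop w a b" "i \<le> c" "c \<le> j" "a \<le> c" "c \<le> b"
  shows "qp_loop w (min i a) (max j b)"
  using qp_loop_union_ordered[OF assms(1,2)] qp_loop_union_ordered[OF assms(2,1)] assms
  by (cases "i \<le> a") (auto simp: min_def max.commute)

lemma qp_loop_restrict:
  assumes "qp_loop w a b" "a < c" "c \<le> b" "pos w c = pos w a"
  shows "qp_loop w a c"
  using assms by (auto simp: qp_loop_iff)

lemma qp_loop_translate:
  assumes "length v = length w" "\<And>k. a \<le> k \<Longrightarrow> k \<le> b \<Longrightarrow> pos v k = pos w k + c"
  shows "qp_loop v a b \<longleftrightarrow> qp_loop w a b"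
  using assms by (auto simp: qp_loop_iff less_eq_prod_def)

definition maximal_qp_loop :: "step list \<Rightarrow> nat \<Rightarrow> nat \<Rightarrow> bool" where
  "maximal_qp_loop w i j \<longleftrightarrow>
     qp_loop w i j \<and> (\<forall>a b. qp_loop w a b \<and> a \<le> i \<and> j \<le> b \<longrightarrow> a = i \<and> b = j)"

text \<open>Step \<open>k\<close> of a walk leads from point \<open>k\<close> to point \<open>k + 1\<close>: \<open>in_qp_loop w k\<close>
  concerns the step, \<open>enclosed w k\<close> the point.\<close>
definition in_qp_loop :: "step list \<Rightarrow> nat \<Rightarrow> bool" where
  "in_qp_loop w k \<longleftrightarrow> (\<exists>i j. qp_loop w i j \<and> i \<le> k \<and> k < j)"

definition enclosed :: "step list \<Rightarrow> nat \<Rightarrow> bool" where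
  "enclosed w k \<longleftrightarrow> (\<exists>i j. qp_loop w i j \<and> i < k \<and> k < j)"

lemma not_enclosed_outside_qp_loop:
  "qp_loop w i j \<Longrightarrow> \<not> enclosed w c \<Longrightarrow> c \<le> i \<or> j \<le> c"
  unfolding enclosed_def by (meson not_le)

lemma maximal_qp_loop_imp_qp_loop: "maximal_qp_loop w i j \<Longrightarrow> qp_loop w i j"
  by (simp add: maximal_qp_loop_def)

lemma maximal_qp_loop_exists:
  "qp_loop w i j \<Longrightarrow> \<exists>a b. maximal_qp_loop w a b \<and> a \<le> i \<and> j \<le> b"
proof (induction "length w - (j - i)" arbitrary: i j rule: less_induct)
  case less
  show ?case
  proof (cases "maximal_qp_loop w i j")
    case False
    then obtain a b where ab: "qp_loop w a b" "a \<le> i" "j \<le> b" "\<not> (a = i \<and> b = j)"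
      using less.prems by (auto simp: maximal_qp_loop_def)
    have "b \<le> length w" "i < j" using ab less.prems by (auto simp: qp_loop_iff)
    then have "length w - (b - a) < length w - (j - i)" using ab by auto
    with less.hyps ab(1) ab(2,3) show ?thesis by (meson order_trans)
  qed auto
qed

lemma maximal_qp_loopD:
  "maximal_qp_loop w i j \<Longrightarrow> qp_loop w a b \<Longrightarrow> a \<le> i \<Longrightarrow> j \<le> b \<Longrightarrow> a = i \<and> b = j"
  by (simp add: maximal_qp_loop_def)

lemma maximal_qp_loop_ends_not_enclosed:
  assumes "maximal_qp_loop w i j"
  shows "\<not> enclosed w i" "\<not> enclosed w j"
proof -
  have ij: "i < j" and l: "qp_loop w i j"
    using assms by (auto simp: maximal_qp_loop_def qp_loop_iff)
  have "min i a = i \<and> max j b = j" if "qp_loop w a b" "a < c" "c < b" "c = i \<or> c = j" for a b c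
  proof -
    have "qp_loop w (min i a) (max j b)"
      using qp_loop_union[OF l that(1), of c] that ij by auto
    then show ?thesis using maximal_qp_loopD[OF assms] by auto
  qed
  then show "\<not> enclosed w i" "\<not> enclosed w j"
    unfolding enclosed_def by (metis min.absorb_iff1 not_le, metis max.absorb_iff1 not_le)
qed

lemma enclosedE:
  assumes "enclosed w k"
  obtains i j where "maximal_qp_loop w i j" "i < k" "k < j"
  using assms maximal_qp_loop_exists unfolding enclosed_def
  by (meson order_le_less_trans order_less_le_trans)

lemma in_qp_loopE:
  assumes "in_qp_loop w k"
  obtains i j where "maximal_qp_loop w i j" "i \<le> k" "k < j"
  using assms maximal_qp_loop_exists unfolding in_qp_loop_def
  by (meson order_trans order_less_le_trans)

lemma not_in_qp_loop_not_enclosed: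
  "\<not> in_qp_loop w k \<Longrightarrow> \<not> enclosed w k \<and> \<not> enclosed w (Suc k)"
  unfolding in_qp_loop_def enclosed_def by (meson less_Suc_eq_le Suc_lessD less_imp_le)

lemma not_enclosed_length: "\<not> enclosed w (length w)"
  by (auto simp: enclosed_def qp_loop_iff)

section \<open>Reflecting the steps outside QP-subloops\<close>

fun reflect_step :: "step \<Rightarrow> step" where
  "reflect_step N = E" | "reflect_step E = N" | "reflect_step S = W" | "reflect_step W = S"

lemma reflect_step_reflect_step [simp]: "reflect_step (reflect_step s) = s"
  by (cases s) auto

lemma step_vec_reflect_step: "step_vec (reflect_step s) = prod.swap (step_vec s)"
  by (cases s) auto

lemma swap_le_swap_iff: "prod.swap p \<le> prod.swap q \<longleftrightarrow> p \<le> q"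
  by (auto simp: less_eq_prod_def)

definition reflect_free_steps :: "step list \<Rightarrow> step list" where
  "reflect_free_steps w =
     map (\<lambda>k. if in_qp_loop w k then w ! k else reflect_step (w ! k)) [0..<length w]"

lemma length_reflect_free_steps [simp]: "length (reflect_free_steps w) = length w"
  by (simp add: reflect_free_steps_def)

lemma nth_reflect_free_steps:
  "k < length w \<Longrightarrow>
     reflect_free_steps w ! k = (if in_qp_loop w k then w ! k else reflect_step (w ! k))"
  by (simp add: reflect_free_steps_def)

lemma pos_diff_eq_if_steps_agree:
  assumes "i \<le> k" "k \<le> length v" "length v = length w"
    and "\<And>m. i \<le> m \<Longrightarrow> m < k \<Longrightarrow> v ! m = w ! m"
  shows "pos v k - pos v i = pos w k - pos w i"
  using assms
proof (induction k rule: dec_induct)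
  case (step m)
  then show ?case by (simp add: pos_Suc algebra_simps)
qed simp

lemma pos_diff_reflect_free_steps_in_maximal:
  assumes ij: "maximal_qp_loop w i j" and "i \<le> k" "k \<le> j"
  shows "pos (reflect_free_steps w) k - pos (reflect_free_steps w) i = pos w k - pos w i"
proof (rule pos_diff_eq_if_steps_agree)
  have "j \<le> length w" using ij by (simp add: maximal_qp_loop_def qp_loop_iff)
  then show "k \<le> length (reflect_free_steps w)" using assms by simp
  fix l assume "i \<le> l" "l < k"
  then have "in_qp_loop w l"
    using ij assms maximal_qp_loop_imp_qp_loop unfolding in_qp_loop_def by fastforce
  then show "reflect_free_steps w ! l = w ! l"
    using \<open>l < k\<close> \<open>k \<le> length (reflect_free_steps w)\<close> by (simp add: nth_reflect_free_steps)
qed (use assms in simp_all)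

text \<open>A maximal QP-subloop is traversed unreflected and returns to its start, so at the points
  outside all loops the reflected walk is exactly the mirror image of the original one.\<close>
lemma pos_reflect_free_steps_not_enclosed:
  "k \<le> length w \<Longrightarrow> \<not> enclosed w k \<Longrightarrow> pos (reflect_free_steps w) k = prod.swap (pos w k)"
proof (induction k rule: less_induct)
  case (less k)
  let ?v = "reflect_free_steps w"
  show ?case
  proof (cases k)
    case (Suc m)
    show ?thesis
    proof (cases "in_qp_loop w m")
      case False
      then have "pos ?v m = prod.swap (pos w m)"
        using less Suc not_in_qp_loop_not_enclosed by auto
      with False show ?thesis using less.prems Suc
        by (simp add: pos_Suc nth_reflect_free_steps step_vec_reflect_step prod_eq_iff)
    next
      case True
      then obtain i j where ij: "maximal_qp_loop w i j" "i \<le> m" "m < j"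
        by (rule in_qp_loopE)
      then have "j = k"
        using Suc less.prems not_enclosed_outside_qp_loop maximal_qp_loop_imp_qp_loop by fastforce
      then have "pos w k = pos w i"
        using ij maximal_qp_loop_imp_qp_loop by (auto simp: qp_loop_iff)
      moreover have "pos ?v i = prod.swap (pos w i)"
        using less ij Suc maximal_qp_loop_ends_not_enclosed(1) by simp
      moreover have "pos ?v k - pos ?v i = pos w k - pos w i"
        using pos_diff_reflect_free_steps_in_maximal ij \<open>j = k\<close> Suc by simp
      ultimately show ?thesis by (metis eq_iff_diff_eq_0)
    qed
  qed (simp add: zero_prod_def)
qed

lemma pos_reflect_free_steps_in_maximal:
  assumes ij: "maximal_qp_loop w i j" and "i \<le> k" "k \<le> j"
  shows "pos (reflect_free_steps w) k = prod.swap (pos w i) + (pos w k - pos w i)"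
proof -
  have "j \<le> length w" using ij by (simp add: maximal_qp_loop_def qp_loop_iff)
  then have "pos (reflect_free_steps w) i = prod.swap (pos w i)"
    using pos_reflect_free_steps_not_enclosed maximal_qp_loop_ends_not_enclosed(1)[OF ij] assms
    by simp
  with pos_diff_reflect_free_steps_in_maximal[OF assms] show ?thesis by (simp add: algebra_simps)
qed

lemma diagonal_pos_reflect_free_steps:
  assumes "k \<le> length w"
  shows "fst (pos (reflect_free_steps w) k) + snd (pos (reflect_free_steps w) k) =
    fst (pos w k) + snd (pos w k)"
proof (cases "enclosed w k")
  case True
  then obtain i j where "maximal_qp_loop w i j" "i < k" "k < j" by (rule enclosedE)
  then show ?thesis using pos_reflect_free_steps_in_maximal[of w i j k] by simp
qed (use assms pos_reflect_free_steps_not_enclosed in simp)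

lemma qp_loop_reflect_free_steps_within:
  assumes ij: "maximal_qp_loop w i j" and "i \<le> a" "b \<le> j"
  shows "qp_loop (reflect_free_steps w) a b \<longleftrightarrow> qp_loop w a b"
proof (rule qp_loop_translate)
  fix k assume "a \<le> k" "k \<le> b"
  then show "pos (reflect_free_steps w) k = pos w k + (prod.swap (pos w i) - pos w i)"
    using pos_reflect_free_steps_in_maximal[OF ij] assms by (simp add: algebra_simps)
qed simp

lemma qp_loop_imp_qp_loop_reflect_free_steps:
  assumes "qp_loop w a b"
  shows "qp_loop (reflect_free_steps w) a b"
proof -
  obtain i j where "maximal_qp_loop w i j" "i \<le> a" "b \<le> j"
    using maximal_qp_loop_exists[OF assms] by blast
  then show ?thesis using assms qp_loop_reflect_free_steps_within by blast
qed

lemma qp_loop_of_reflect_free_steps_not_enclosed: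
  assumes l: "qp_loop (reflect_free_steps w) a b"
    and fa: "\<not> enclosed w a" and fb: "\<not> enclosed w b"
  shows "qp_loop w a b"
proof -
  let ?v = "reflect_free_steps w"
  have ab: "a < b" "b \<le> length w" using l by (auto simp: qp_loop_iff)
  have swapped: "pos ?v k = prod.swap (pos w k)" if "k \<le> length w" "\<not> enclosed w k" for k
    using pos_reflect_free_steps_not_enclosed that by blast
  have sva: "pos ?v a = prod.swap (pos w a)" and svb: "pos ?v b = prod.swap (pos w b)"
    using swapped fa fb ab by auto
  have above: "prod.swap (pos w a) \<le> pos ?v k" if "a \<le> k" "k \<le> b" for k
    using l that unfolding qp_loop_iff sva[symmetric] by blast
  have "pos w a \<le> pos w k" if k: "a \<le> k" "k \<le> b" for k
  proof (cases "enclosed w k")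
    case False
    then have "prod.swap (pos w a) \<le> prod.swap (pos w k)"
      using above[OF k] swapped[of k] k ab by simp
    then show ?thesis by (simp only: swap_le_swap_iff)
  next
    case True
    then obtain i j where ij: "maximal_qp_loop w i j" "i < k" "k < j" by (rule enclosedE)
    have lij: "qp_loop w i j" using ij(1) by (rule maximal_qp_loop_imp_qp_loop)
    have "a \<le> i" using not_enclosed_outside_qp_loop[OF lij fa] ij k by auto
    moreover have "j \<le> b" using not_enclosed_outside_qp_loop[OF lij fb] ij k by auto
    ultimately have "prod.swap (pos w a) \<le> prod.swap (pos w i)"
      using above[of i] ij ab swapped[of i] maximal_qp_loop_ends_not_enclosed(1)[OF ij(1)] by simp
    then have "pos w a \<le> pos w i" by (simp only: swap_le_swap_iff)
    also have "pos w i \<le> pos w k"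
      using lij ij by (auto simp: qp_loop_iff)
    finally show ?thesis .
  qed
  moreover have "pos w a = pos w b"
    using l sva svb by (auto simp: qp_loop_iff prod_eq_iff)
  ultimately show ?thesis using ab by (auto simp: qp_loop_iff)
qed

text \<open>In the two lemmas below, a loop of the reflected walk that starts or ends strictly inside a
  maximal loop of \<open>w\<close> and leaves it is extended to the end of that maximal loop; this yields
  a larger loop of \<open>w\<close>, a contradiction.\<close>
lemma qp_loop_of_reflect_free_steps_start_not_enclosed:
  assumes l: "qp_loop (reflect_free_steps w) a b" and fa: "\<not> enclosed w a"
  shows "qp_loop w a b"
proof (cases "enclosed w b")
  case True
  let ?v = "reflect_free_steps w"
  obtain i j where ij: "maximal_qp_loop w i j" "i < b" "b < j"
    using True by (rule enclosedE)
  have lij: "qp_loop w i j" using ij(1) by (rule maximal_qp_loop_imp_qp_loop)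
  have "a \<le> i" using not_enclosed_outside_qp_loop[OF lij fa] ij l by (auto simp: qp_loop_iff)
  show ?thesis
  proof (cases "a = i")
    case True
    then show ?thesis using l ij qp_loop_reflect_free_steps_within by auto
  next
    case False
    have "pos ?v i \<le> pos ?v b"
      using lij ij pos_reflect_free_steps_in_maximal[OF ij(1), of i]
        pos_reflect_free_steps_in_maximal[OF ij(1), of b]
      by (auto simp: qp_loop_iff less_eq_prod_def)
    moreover have "pos ?v a \<le> pos ?v i" "pos ?v a = pos ?v b"
      using l \<open>a \<le> i\<close> ij by (auto simp: qp_loop_iff)
    ultimately have "pos ?v i = pos ?v a" by auto
    then have "qp_loop ?v a i" using qp_loop_restrict l False \<open>a \<le> i\<close> ij by simp
    then have "qp_loop w a i"
      using qp_loop_of_reflect_free_steps_not_enclosed fa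
        maximal_qp_loop_ends_not_enclosed(1)[OF ij(1)] by blast
    then have "qp_loop w a j"
      using qp_loop_union[OF _ lij, of a i i] ij \<open>a \<le> i\<close> by (simp add: min_absorb1 max_absorb2)
    then show ?thesis using maximal_qp_loopD[OF ij(1), of a j] False \<open>a \<le> i\<close> ij by auto
  qed
qed (use qp_loop_of_reflect_free_steps_not_enclosed assms in blast)


lemma qp_loop_of_reflect_free_steps:
  assumes l: "qp_loop (reflect_free_steps w) a b"
  shows "qp_loop w a b"
proof (cases "enclosed w a")
  case True
  let ?v = "reflect_free_steps w"
  obtain i j where ij: "maximal_qp_loop w i j" "i < a" "a < j"
    using True by (rule enclosedE)
  have lij: "qp_loop w i j" using ij(1) by (rule maximal_qp_loop_imp_qp_loop)
  show ?thesis
  proof (cases "b \<le> j")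
    case True
    then show ?thesis using l ij qp_loop_reflect_free_steps_within by auto
  next
    case False
    have "pos ?v a \<le> pos ?v j" using l ij False by (auto simp: qp_loop_iff)
    then have "pos w a \<le> pos w j"
      using ij pos_reflect_free_steps_in_maximal[OF ij(1), of a]
        pos_reflect_free_steps_in_maximal[OF ij(1), of j]
      by (auto simp: less_eq_prod_def)
    moreover have "pos w i \<le> pos w a" "pos w i = pos w j" using lij ij by (auto simp: qp_loop_iff)
    ultimately have "pos w a = pos w i" by auto
    then have "qp_loop w i a" using qp_loop_restrict[OF lij] ij by simp
    then have "qp_loop ?v i a" using qp_loop_imp_qp_loop_reflect_free_steps by blast
    moreover have "a < b" using l by (simp add: qp_loop_iff)
    ultimately have "qp_loop ?v i b"
      using qp_loop_union[OF _ l, of i a a] ij by (simp add: min_absorb1 max_absorb2)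
    then have "qp_loop w i b"
      using qp_loop_of_reflect_free_steps_start_not_enclosed
        maximal_qp_loop_ends_not_enclosed(1)[OF ij(1)] by blast
    then show ?thesis using maximal_qp_loopD[OF ij(1), of i b] False by auto
  qed
qed (use qp_loop_of_reflect_free_steps_start_not_enclosed assms in blast)

lemma qp_loop_reflect_free_steps_iff: "qp_loop (reflect_free_steps w) a b \<longleftrightarrow> qp_loop w a b"
  using qp_loop_of_reflect_free_steps qp_loop_imp_qp_loop_reflect_free_steps by blast

lemma in_qp_loop_reflect_free_steps_iff: "in_qp_loop (reflect_free_steps w) k \<longleftrightarrow> in_qp_loop w k"
  by (simp add: in_qp_loop_def qp_loop_reflect_free_steps_iff)

lemma reflect_free_steps_involution: "reflect_free_steps (reflect_free_steps w) = w"
  by (rule nth_equalityI) (simp_all add: nth_reflect_free_steps in_qp_loop_reflect_free_steps_iff)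

lemma standard_reflect_free_steps: "standard w \<Longrightarrow> standard (reflect_free_steps w)"
  unfolding standard_iff_qp_loop qp_loop_reflect_free_steps_iff
  by (auto simp: nth_reflect_free_steps in_qp_loop_def qp_loop_iff)

lemma step_leaving_qp_loop:
  assumes "in_qp_loop w k" "\<not> in_qp_loop w (Suc k)"
  shows "w ! k = S \<or> w ! k = W"
proof -
  obtain i j where ij: "maximal_qp_loop w i j" "i \<le> k" "k < j"
    using assms(1) by (rule in_qp_loopE)
  have "j = Suc k"
    using assms(2) ij maximal_qp_loop_imp_qp_loop unfolding in_qp_loop_def
    by (metis Suc_leI le_SucI le_neq_implies_less)
  then show ?thesis using qp_loop_last_step[OF maximal_qp_loop_imp_qp_loop[OF ij(1)]] by simp
qed

lemma step_entering_qp_loop: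
  assumes "standard w" "\<not> in_qp_loop w k" "in_qp_loop w (Suc k)"
  shows "w ! Suc k = N"
proof -
  obtain i j where ij: "maximal_qp_loop w i j" "i \<le> Suc k" "Suc k < j"
    using assms(3) by (rule in_qp_loopE)
  have "i = Suc k"
    using assms(2) ij maximal_qp_loop_imp_qp_loop unfolding in_qp_loop_def
    by (metis Suc_lessD le_SucE)
  then show ?thesis
    using assms(1) ij maximal_qp_loop_imp_qp_loop unfolding standard_iff_qp_loop by blast
qed

lemma eager_reflect_free_steps:
  assumes "standard w" "eager w"
  shows "eager (reflect_free_steps w)"
  unfolding eager_def
proof (intro allI impI)
  fix k assume k: "Suc k < length (reflect_free_steps w)"
  let ?s = "reflect_free_steps w ! k" and ?t = "reflect_free_steps w ! Suc k"
  consider "in_qp_loop w k = in_qp_loop w (Suc k)"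
    | "in_qp_loop w k" "\<not> in_qp_loop w (Suc k)"
    | "\<not> in_qp_loop w k" "in_qp_loop w (Suc k)" by blast
  then show "\<not> (?s = E \<and> ?t = S) \<and> \<not> (?s = N \<and> ?t = W)"
  proof cases
    case 1 \<comment> \<open>reflection exchanges the forbidden pairs \<open>E S\<close> and \<open>N W\<close>\<close>
    then show ?thesis using assms(2) k unfolding eager_def
      by (cases "w ! k"; cases "w ! Suc k") (auto simp: nth_reflect_free_steps)
  next
    case 2
    then show ?thesis using step_leaving_qp_loop[of w k] k by (auto simp: nth_reflect_free_steps)
  next
    case 3
    then show ?thesis
      using step_entering_qp_loop[OF assms(1)] k by (auto simp: nth_reflect_free_steps)
  qed
qed

lemma big_walk_reflect_free_steps:
  assumes "big_walk w"
  shows "big_walk (reflect_free_steps w)"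
  using assms standard_reflect_free_steps eager_reflect_free_steps
    diagonal_pos_reflect_free_steps[of _ w]
  by (simp add: big_walk_def)

lemma endpoint_reflect_free_steps:
  "pos (reflect_free_steps w) (length w) = prod.swap (pos w (length w))"
  using pos_reflect_free_steps_not_enclosed not_enclosed_length by blast

section \<open>Concatenation of big-walks\<close>

lemma qp_loop_append_left: "j \<le> length u \<Longrightarrow> qp_loop (u @ v) i j \<longleftrightarrow> qp_loop u i j"
  by (auto simp: qp_loop_iff pos_append_left)

lemma qp_loop_append_right:
  "qp_loop (u @ v) (length u + i) (length u + j) \<longleftrightarrow> qp_loop v i j"
proof -
  let ?n = "length u"
  have "(\<forall>k. ?n + i \<le> k \<and> k \<le> ?n + j \<longrightarrow> pos (u @ v) (?n + i) \<le> pos (u @ v) k) \<longleftrightarrow>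
      (\<forall>k. i \<le> k \<and> k \<le> j \<longrightarrow> pos v i \<le> pos v k)"
  proof safe
    fix k assume "\<forall>k. ?n + i \<le> k \<and> k \<le> ?n + j \<longrightarrow> pos (u @ v) (?n + i) \<le> pos (u @ v) k"
      and "i \<le> k" "k \<le> j"
    then show "pos v i \<le> pos v k"
      by (auto simp: pos_append_right less_eq_prod_def dest: spec[of _ "?n + k"])
  next
    fix k assume "\<forall>k. i \<le> k \<and> k \<le> j \<longrightarrow> pos v i \<le> pos v k"
      and "?n + i \<le> k" "k \<le> ?n + j"
    then show "pos (u @ v) (?n + i) \<le> pos (u @ v) k"
      using pos_append_right[of u v "k - ?n"]
      by (auto simp: pos_append_right less_eq_prod_def dest: spec[of _ "k - ?n"])
  qed
  then show ?thesis by (auto simp: qp_loop_iff pos_append_right)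
qed

lemma eager_append:
  assumes "eager u" "eager v" and last: "u \<noteq> [] \<Longrightarrow> last u = S \<or> last u = W"
  shows "eager (u @ v)"
  unfolding eager_def
proof (intro allI impI)
  fix i assume i: "Suc i < length (u @ v)"
  consider "Suc i < length u" | "length u \<le> i" | "Suc i = length u" by linarith
  then show "\<not> ((u @ v) ! i = E \<and> (u @ v) ! Suc i = S) \<and> \<not> ((u @ v) ! i = N \<and> (u @ v) ! Suc i = W)"
  proof cases
    case 1
    then show ?thesis using assms(1) by (simp add: eager_def nth_append)
  next
    case 2
    then have "Suc (i - length u) < length v" "Suc i - length u = Suc (i - length u)"
      using i by auto
    then show ?thesis using assms(2) 2 by (simp add: eager_def nth_append)
  next
    case 3
    then have "u \<noteq> []" by auto
    with 3 have "(u @ v) ! i = last u" by (simp add: nth_append last_conv_nth flip: 3)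
    then show ?thesis using last[OF \<open>u \<noteq> []\<close>] by auto
  qed
qed

lemma standard_append:
  assumes "standard u" "standard v"
    and min: "\<And>k. k \<le> length u \<Longrightarrow>
      fst (pos u (length u)) + snd (pos u (length u)) \<le> fst (pos u k) + snd (pos u k)"
  shows "standard (u @ v)"
  unfolding standard_iff_qp_loop
proof (intro allI impI)
  fix i j assume l: "qp_loop (u @ v) i j"
  let ?n = "length u"
  consider "j \<le> ?n" | "?n \<le> i" | "i < ?n" "?n < j" by linarith
  then show "(u @ v) ! i = N"
  proof cases
    case 1
    then have "qp_loop u i j" using l qp_loop_append_left by blast
    then show ?thesis using assms(1) 1 by (auto simp: standard_iff_qp_loop nth_append qp_loop_iff)
  next
    case 2
    then have "i = ?n + (i - ?n)" "j = ?n + (j - ?n)" using l by (auto simp: qp_loop_iff)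
    then have "qp_loop v (i - ?n) (j - ?n)" using l qp_loop_append_right by metis
    then have "v ! (i - ?n) = N" using assms(2) unfolding standard_iff_qp_loop by blast
    then show ?thesis using 2 by (simp add: nth_append)
  next
    case 3
    have "\<forall>k. i \<le> k \<and> k \<le> j \<longrightarrow> pos (u @ v) i \<le> pos (u @ v) k"
      using l unfolding qp_loop_iff by blast
    then have "pos (u @ v) i \<le> pos (u @ v) ?n" using 3 by (meson less_imp_le)
    then have "pos u i \<le> pos u ?n" using 3 by (simp add: pos_append_left)
    with min[of i] 3 have "pos (u @ v) ?n = pos (u @ v) i"
      by (auto simp: pos_append_left less_eq_prod_def prod_eq_iff)
    then have "qp_loop (u @ v) i ?n" using qp_loop_restrict[OF l] 3 by simp
    then have "qp_loop u i ?n" using qp_loop_append_left by blast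
    then have "u ! i = N" using assms(1) unfolding standard_iff_qp_loop by blast
    then show ?thesis using 3 by (simp add: nth_append)
  qed
qed

lemma big_walk_last_step:
  assumes "big_walk u" "u \<noteq> []"
  shows "last u = S \<or> last u = W"
proof -
  let ?k = "length u - 1"
  have k: "?k < length u" "Suc ?k = length u" using assms(2) by auto
  have "fst (pos u ?k) + snd (pos u ?k) \<ge> 0"
    "fst (pos u (length u)) + snd (pos u (length u)) = 0"
    using assms(1) by (auto simp: big_walk_def)
  moreover have "pos u (length u) = pos u ?k + step_vec (u ! ?k)"
    using pos_Suc[OF k(1)] k(2) by simp
  ultimately show ?thesis using assms(2) by (cases "u ! ?k") (auto simp: last_conv_nth)
qed

lemma big_walk_append:
  assumes u: "big_walk u" and v: "big_walk v"
  shows "big_walk (u @ v)"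
proof -
  let ?n = "length u"
  have "fst (pos (u @ v) k) + snd (pos (u @ v) k) \<ge> 0" if "k \<le> length (u @ v)" for k
  proof (cases "k \<le> ?n")
    case False
    then have "pos (u @ v) k = pos u ?n + pos v (k - ?n)" "k - ?n \<le> length v"
      using pos_append_right[of u v "k - ?n"] that by auto
    then show ?thesis using u v by (auto simp: big_walk_def)
  qed (use u in \<open>auto simp: big_walk_def pos_append_left\<close>)
  moreover have "fst (pos (u @ v) (length (u @ v))) + snd (pos (u @ v) (length (u @ v))) = 0"
    using u v pos_append_right[of u v "length v"] by (simp add: big_walk_def)
  moreover have "eager (u @ v)"
    using u v big_walk_last_step eager_append by (simp add: big_walk_def)
  moreover have "standard (u @ v)" using u v standard_append by (simp add: big_walk_def)
  ultimately show ?thesis by (simp add: big_walk_def)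
qed

section \<open>Counting\<close>

lemma step_UNIV: "(UNIV :: step set) = {N, E, S, W}"
  using step.exhaust by auto

lemma finite_step_lists: "finite {w :: step list. length w = k}"
proof -
  have "finite (UNIV :: step set)" by (simp add: step_UNIV)
  then show ?thesis using finite_lists_length_eq[of "UNIV :: step set" k] by simp
qed

lemma card_step_lists: "card {w :: step list. length w = k} = 4 ^ k"
proof -
  have "finite (UNIV :: step set)" "card (UNIV :: step set) = 4" by (simp_all add: step_UNIV)
  then show ?thesis using card_lists_length_eq[of "UNIV :: step set" k] by simp
qed

lemma big_walk_Nil: "big_walk []"
  by (auto simp: big_walk_def standard_def eager_def qp_subloop_def)

lemma big_walk_NS: "big_walk [N, S]"
proof -
  have p: "pos [N, S] 1 = (0, 1)" "pos [N, S] 2 = 0"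
    by (simp_all add: pos_def zero_prod_def)
  have "standard [N, S]"
    unfolding standard_iff_qp_loop
  proof (intro allI impI)
    fix i j assume l: "qp_loop [N, S] i j"
    then have "i = 0 \<or> (i = 1 \<and> j = 2)" by (auto simp: qp_loop_iff)
    then show "[N, S] ! i = N" using l p by (auto simp: qp_loop_iff zero_prod_def)
  qed
  moreover have "eager [N, S]" by (auto simp: eager_def)
  moreover have "0 \<le> fst (pos [N, S] k) + snd (pos [N, S] k)" for k
    by (simp add: pos_def take_Cons')
  ultimately show ?thesis by (simp add: big_walk_def pos_def)
qed

lemma big_walk_concat: "(\<And>u. u \<in> set us \<Longrightarrow> big_walk u) \<Longrightarrow> big_walk (concat us)"
  by (induction us) (simp_all add: big_walk_Nil big_walk_append)

definition big_walks :: "nat \<Rightarrow> step list set" where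
  "big_walks n = {w. length w = 2 * n \<and> big_walk w}"

lemma finite_big_walks: "finite (big_walks n)"
  by (rule finite_subset[of _ "{w. length w = 2 * n}"])
    (auto simp: big_walks_def finite_step_lists)

lemma num_big_eq_card: "num_big n = card (big_walks n)"
  by (simp add: num_big_def big_walks_def)

lemma num_big_supermultiplicative: "num_big m * num_big n \<le> num_big (m + n)"
proof -
  have "inj_on (\<lambda>(u, v). u @ v) (big_walks m \<times> big_walks n)"
    by (auto simp: inj_on_def big_walks_def)
  moreover have "(\<lambda>(u, v). u @ v) ` (big_walks m \<times> big_walks n) \<subseteq> big_walks (m + n)"
    by (auto simp: big_walks_def big_walk_append)
  ultimately have "card (big_walks m \<times> big_walks n) \<le> card (big_walks (m + n))"
    using card_inj_on_le finite_big_walks by blast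
  then show ?thesis by (simp add: num_big_eq_card card_cartesian_product)
qed

lemma num_big_le_power: "num_big n \<le> 16 ^ n"
proof -
  have "card (big_walks n) \<le> card {w :: step list. length w = 2 * n}"
    by (rule card_mono) (auto simp: big_walks_def finite_step_lists)
  then show ?thesis by (simp add: num_big_eq_card card_step_lists power_mult)
qed

lemma num_big_pos: "1 \<le> num_big n"
proof -
  have "concat (replicate n [N, S]) \<in> big_walks n"
    using big_walk_concat[of "replicate n [N, S]"] big_walk_NS
    by (simp add: big_walks_def length_concat sum_list_replicate)
  then have "big_walks n \<noteq> {}" by blast
  then show ?thesis
    using finite_big_walks[of n] by (simp add: num_big_eq_card Suc_le_eq card_gt_0_iff)
qed

lemma num_big_le_twice_num_left: "num_big n \<le> 2 * num_left n"
proof -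
  let ?L = "{w. length w = 2 * n \<and> left_walk w}"
  let ?R = "{w \<in> big_walks n. fst (pos w (length w)) > 0}"
  have fin_L: "finite ?L"
    by (rule finite_subset[OF _ finite_big_walks[of n]]) (auto simp: big_walks_def left_walk_def)
  have fin_R: "finite ?R" using finite_big_walks[of n] by simp
  have "inj_on reflect_free_steps ?R"
    by (metis inj_on_inverseI reflect_free_steps_involution)
  moreover have "reflect_free_steps ` ?R \<subseteq> ?L"
  proof (rule image_subsetI)
    fix w assume "w \<in> ?R"
    then have w: "w \<in> big_walks n" "0 < fst (pos w (length w))" by auto
    then have "fst (pos w (length w)) + snd (pos w (length w)) = 0"
      by (auto simp: big_walks_def big_walk_def)
    then have "fst (pos (reflect_free_steps w) (length w)) \<le> 0"
      using w(2) by (simp add: endpoint_reflect_free_steps)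
    then show "reflect_free_steps w \<in> ?L"
      using w big_walk_reflect_free_steps by (simp add: big_walks_def left_walk_def)
  qed
  ultimately have "card ?R \<le> card ?L" using fin_L by (simp add: card_inj_on_le)
  moreover have "big_walks n = ?L \<union> ?R" "?L \<inter> ?R = {}"
    by (auto simp: big_walks_def left_walk_def)
  then have "card (big_walks n) = card ?L + card ?R"
    using fin_L fin_R card_Un_disjoint by metis
  ultimately show ?thesis by (simp add: num_big_eq_card num_left_def)
qed

lemma num_left_le_num_big: "num_left n \<le> num_big n"
  unfolding num_left_def num_big_eq_card
  by (rule card_mono[OF finite_big_walks]) (auto simp: big_walks_def left_walk_def)

section \<open>Growth rates\<close>

lemma superadditive_mult_le:
  fixes a :: "nat \<Rightarrow> real"
  assumes "\<And>m n. a m + a n \<le> a (m + n)" "\<And>n. 0 \<le> a n"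
  shows "real q * a m \<le> a (q * m)"
proof (induction q)
  case (Suc q)
  then show ?case using assms(1)[of "q * m" m] by (simp add: algebra_simps)
qed (simp add: assms(2))

lemma superadditive_ratio_lower_bound:
  fixes a :: "nat \<Rightarrow> real"
  assumes sa: "\<And>m n. a m + a n \<le> a (m + n)" and nn: "\<And>n. 0 \<le> a n"
    and "0 < m" "0 < n"
  shows "(1 - real m / real n) * (a m / real m) \<le> a n / real n"
proof -
  define q where "q = n div m"
  have n: "n = q * m + n mod m" by (simp add: q_def)
  have "n \<le> q * m + m" using n mod_less_divisor[OF \<open>0 < m\<close>, of n] by linarith
  then have "real n - real m \<le> real q * real m" by (simp flip: of_nat_mult of_nat_add)
  have "(1 - real m / real n) * (a m / real m) = (real n - real m) * (a m / real m) / real n"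
    using \<open>0 < n\<close> by (simp add: field_simps)
  also have "\<dots> \<le> (real q * real m) * (a m / real m) / real n"
    using \<open>real n - real m \<le> real q * real m\<close> nn[of m]
    by (intro divide_right_mono mult_right_mono) simp_all
  also have "\<dots> = real q * a m / real n" using \<open>0 < m\<close> by simp
  also have "\<dots> \<le> a n / real n"
  proof (intro divide_right_mono)
    show "real q * a m \<le> a n"
      using superadditive_mult_le[of a, OF sa nn, of q m] sa[of "q * m" "n mod m"] nn[of "n mod m"]
      by (simp flip: n)
  qed simp
  finally show ?thesis .
qed

lemma superadditive_tendsto_SUP:
  fixes a :: "nat \<Rightarrow> real"
  assumes sa: "\<And>m n. a m + a n \<le> a (m + n)" and nn: "\<And>n. 0 \<le> a n"
    and bound: "\<And>n. a n \<le> c * real n"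
  shows "(\<lambda>n. a n / real n) \<longlonglongrightarrow> (SUP n\<in>{0<..}. a n / real n)"
proof -
  define L where "L = (SUP n\<in>{0<..}. a n / real n)"
  have bdd: "bdd_above ((\<lambda>n. a n / real n) ` {0<..})"
    using bound by (intro bdd_aboveI[of _ c]) (auto simp: divide_le_eq)
  have upper: "a n / real n \<le> L" if "0 < n" for n
    unfolding L_def using bdd that by (auto intro: cSUP_upper)
  show ?thesis
    unfolding L_def[symmetric]
  proof (rule order_tendstoI)
    fix y assume "y < L"
    then obtain m where m: "0 < m" "y < a m / real m"
      using less_cSUP_iff[OF _ bdd] unfolding L_def by force
    have "(\<lambda>n. (1 - real m / real n) * (a m / real m)) \<longlonglongrightarrow> (1 - 0) * (a m / real m)"
      by (intro tendsto_intros)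
    then have "\<forall>\<^sub>F n in sequentially. y < (1 - real m / real n) * (a m / real m)"
      using m(2) by (intro order_tendstoD(1)) simp_all
    then show "\<forall>\<^sub>F n in sequentially. y < a n / real n"
      using eventually_gt_at_top[of 0]
    proof eventually_elim
      case (elim n)
      then show ?case using superadditive_ratio_lower_bound[of a, OF sa nn m(1) elim(2)] by linarith
    qed
  next
    fix y assume "L < y"
    show "\<forall>\<^sub>F n in sequentially. a n / real n < y"
      using eventually_gt_at_top[of 0]
    proof eventually_elim
      case (elim n)
      then show ?case using upper[of n] \<open>L < y\<close> by linarith
    qed
  qed
qed

lemma supermultiplicative_root_convergent:
  fixes b :: "nat \<Rightarrow> real"
  assumes pos: "\<And>n. 1 \<le> b n" and sm: "\<And>m n. b m * b n \<le> b (m + n)"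
    and bound: "\<And>n. b n \<le> C ^ n"
  shows "\<exists>L. (\<lambda>n. root n (b n)) \<longlonglongrightarrow> L"
proof -
  let ?a = "\<lambda>n. ln (b n)"
  have "?a m + ?a n \<le> ?a (m + n)" for m n
  proof -
    have "0 < b m" "0 < b n" using pos[of m] pos[of n] by linarith+
    moreover have "ln (b m * b n) \<le> ln (b (m + n))"
      using sm[of m n] pos[of "m + n"] \<open>0 < b m\<close> \<open>0 < b n\<close> by (subst ln_le_cancel_iff) auto
    ultimately show ?thesis by (simp add: ln_mult)
  qed
  moreover have "0 \<le> ?a n" for n using pos[of n] by simp
  moreover have "?a n \<le> ln C * real n" for n
  proof -
    have "0 < C" using pos[of 1] bound[of 1] by simp
    then have "?a n \<le> ln (C ^ n)"
      using pos[of n] bound[of n] by (subst ln_le_cancel_iff) auto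
    then show ?thesis using \<open>0 < C\<close> by (simp add: ln_realpow mult.commute)
  qed
  ultimately have "(\<lambda>n. ?a n / real n) \<longlonglongrightarrow> (SUP n\<in>{0<..}. ?a n / real n)"
    by (rule superadditive_tendsto_SUP)
  then have "(\<lambda>n. exp (?a n / real n)) \<longlonglongrightarrow> exp (SUP n\<in>{0<..}. ?a n / real n)"
    by (rule tendsto_exp)
  moreover have "\<forall>\<^sub>F n in sequentially. exp (?a n / real n) = root n (b n)"
    using eventually_gt_at_top[of 0]
  proof eventually_elim
    case (elim n)
    moreover have "0 < b n" using pos[of n] by linarith
    ultimately show ?case by (simp add: root_powr_inverse powr_def)
  qed
  ultimately have "(\<lambda>n. root n (b n)) \<longlonglongrightarrow> exp (SUP n\<in>{0<..}. ?a n / real n)"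
    by (rule Lim_transform_eventually)
  then show ?thesis ..
qed

lemma root_tendsto_of_comparable:
  fixes b c :: "nat \<Rightarrow> real"
  assumes lim: "(\<lambda>n. root n (b n)) \<longlonglongrightarrow> L" and "0 < K"
    and le: "\<And>n. c n \<le> b n" and ge: "\<And>n. b n \<le> K * c n"
  shows "(\<lambda>n. root n (c n)) \<longlonglongrightarrow> L"
proof (rule tendsto_sandwich)
  have "(\<lambda>n. root n (b n) / root n K) \<longlonglongrightarrow> L / 1"
    using lim LIMSEQ_root_const[OF \<open>0 < K\<close>] by (rule tendsto_divide) simp
  then show "(\<lambda>n. root n (b n) / root n K) \<longlonglongrightarrow> L" by simp
  show "\<forall>\<^sub>F n in sequentially. root n (b n) / root n K \<le> root n (c n)"
    using eventually_gt_at_top[of 0]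
  proof eventually_elim
    case (elim n)
    have "root n (b n / K) \<le> root n (c n)"
      using ge[of n] \<open>0 < K\<close> elim
      by (intro real_root_le_mono) (simp_all add: divide_le_eq mult.commute)
    then show ?case by (simp add: real_root_divide)
  qed
  show "\<forall>\<^sub>F n in sequentially. root n (c n) \<le> root n (b n)"
    using eventually_gt_at_top[of 0] by eventually_elim (simp add: le real_root_le_mono)
qed (use lim in simp)

theorem mainTheorem3:
  shows "(\<forall>m n. num_big (m + n) \<ge> num_big m * num_big n)
    \<and> (\<forall>n. num_big n \<le> 16 ^ n)
    \<and> (\<exists>L::real. (\<lambda>n. root n (real (num_big n))) \<longlonglongrightarrow> L)
    \<and> (\<forall>n. 2 * num_left n \<ge> num_big n)
    \<and> (\<exists>L::real. (\<lambda>n. root n (real (num_big n))) \<longlonglongrightarrow> L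
                 \<and> (\<lambda>n. root n (real (num_left n))) \<longlonglongrightarrow> L)"
proof -
  have "\<exists>L. (\<lambda>n. root n (real (num_big n))) \<longlonglongrightarrow> L"
  proof (rule supermultiplicative_root_convergent)
    show "1 \<le> real (num_big n)" for n using num_big_pos[of n] by simp
    show "real (num_big m) * real (num_big n) \<le> real (num_big (m + n))" for m n
      using num_big_supermultiplicative[of m n] by (simp flip: of_nat_mult)
    show "real (num_big n) \<le> 16 ^ n" for n
      using num_big_le_power[of n] by (simp flip: of_nat_power)
  qed
  then obtain L where L: "(\<lambda>n. root n (real (num_big n))) \<longlonglongrightarrow> L" ..
  have "(\<lambda>n. root n (real (num_left n))) \<longlonglongrightarrow> L"
  proof (rule root_tendsto_of_comparable[OF L])
    show "real (num_left n) \<le> real (num_big n)" for n using num_left_le_num_big[of n] by simp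
    show "real (num_big n) \<le> 2 * real (num_left n)" for n
      using num_big_le_twice_num_left[of n] by simp
  qed simp
  with L num_big_supermultiplicative num_big_le_power num_big_le_twice_num_left
  show ?thesis by blast
qed

end
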